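(* Let $G=(V,E)$ be an undirected graph in which every vertex has degree at most $d$, let $\pi$ be a uniformly random ordering of $V$, and let $P$ be the $\delta$-prefix of $V$ with respect to $\pi$. If $\delta\le k/d$, then the expected number of vertices in $P$ incident to at least one internal edge of $P$ is $O(k|P|)$.
   Context: For $0<\delta\le1$, the $\delta$-prefix of $V$ with respect to $\pi$ is the set of the $\delta|V|$ earliest vertices in $\pi$. The internal edges of $P$ are the edges of $G$ with both endpoints in $P$. *)

theory Defs
  imports "HOL-Probability.Probability" "HOL-Combinatorics.Multiset_Permutations"
begin

definition ugraph :: "'a set \<Rightarrow> 'a set set \<Rightarrow> bool" where
  "ugraph V E \<longleftrightarrow> finite V \<and> (\<forall>e\<in>E. e \<subseteq> V \<and> card e = 2)"

definition degree :: "'a set set \<Rightarrow> 'a \<Rightarrow> nat" where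
  "degree E v = card {e\<in>E. v \<in> e}"

text \<open>The delta-prefix of V with respect to an ordering pi (a list enumerating V):
  the first floor(delta |V|) vertices.\<close>
definition prefix_set :: "real \<Rightarrow> 'a set \<Rightarrow> 'a list \<Rightarrow> 'a set" where
  "prefix_set \<delta> V \<pi> = set (take (nat \<lfloor>\<delta> * real (card V)\<rfloor>) \<pi>)"

definition internal_edges :: "'a set set \<Rightarrow> 'a set \<Rightarrow> 'a set set" where
  "internal_edges E P = {e\<in>E. e \<subseteq> P}"

definition covered_vertices :: "'a set set \<Rightarrow> 'a set \<Rightarrow> 'a set" where
  "covered_vertices E P = {v\<in>P. \<exists>e\<in>internal_edges E P. v \<in> e}"

end

theory Submission
  imports Defs
begin

text \<open>Every covered vertex lies on an internal edge, so there are at most twice as many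
  covered vertices as internal edges. Permutations of V act transitively on the 2-subsets of V,
  so every edge lies in the prefix of length m with the same probability C(m,2)/C(n,2), where
  n = |V|. Since 2|E| \<le> n d, the expected number of covered vertices is at most
  d m (m-1)/(n-1) \<le> d \<delta> m \<le> k m.\<close>

lemma sum_card_filter_swap:
  assumes "finite A" "finite B"
  shows "(\<Sum>a\<in>A. card {b\<in>B. R a b}) = (\<Sum>b\<in>B. card {a\<in>A. R a b})"
proof -
  have "\<And>a. card {b\<in>B. R a b} = (\<Sum>b\<in>B. if R a b then 1 else 0)"
    "\<And>b. card {a\<in>A. R a b} = (\<Sum>a\<in>A. if R a b then 1 else 0)"
    using assms by (simp_all add: sum.inter_filter[symmetric])
  then show ?thesis
    by (simp only:) (rule sum.swap)
qed

lemma two_mult_choose_two: "2 * (n choose 2) = n * (n - 1)"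
  by (cases n) (simp_all add: choose_two)

lemma ugraph_finite_edges:
  assumes "ugraph V E"
  shows "finite E"
proof (rule finite_subset)
  show "E \<subseteq> Pow V" and "finite (Pow V)"
    using assms unfolding ugraph_def by auto
qed

lemma sum_degree_eq_twice_card_edges:
  assumes "ugraph V E"
  shows "(\<Sum>v\<in>V. degree E v) = 2 * card E"
proof -
  have fin: "finite V" and edges: "\<And>e. e \<in> E \<Longrightarrow> e \<subseteq> V \<and> card e = 2"
    using assms unfolding ugraph_def by auto
  have "(\<Sum>v\<in>V. degree E v) = (\<Sum>e\<in>E. card {v\<in>V. v \<in> e})"
    unfolding degree_def by (rule sum_card_filter_swap[OF fin ugraph_finite_edges[OF assms]])
  also have "\<dots> = (\<Sum>e\<in>E. 2)"
  proof (rule sum.cong)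
    fix e assume "e \<in> E"
    then have "{v\<in>V. v \<in> e} = e" using edges by auto
    then show "card {v\<in>V. v \<in> e} = 2" using edges \<open>e \<in> E\<close> by simp
  qed simp
  finally show ?thesis by simp
qed

lemma card_covered_vertices_le:
  assumes "\<forall>e\<in>E. card e = 2"
  shows "card (covered_vertices E P) \<le> 2 * card (internal_edges E P)"
proof -
  have "covered_vertices E P = \<Union>(internal_edges E P)"
    unfolding covered_vertices_def internal_edges_def by auto
  then have "card (covered_vertices E P) \<le> (\<Sum>e\<in>internal_edges E P. card e)"
    by (simp add: card_Union_le_sum_card)
  also have "\<dots> = 2 * card (internal_edges E P)"
    using assms by (simp add: internal_edges_def)
  finally show ?thesis .
qed

lemma covered_vertices_eq_empty:
  assumes "\<forall>e\<in>E. card e = 2" "finite P" "card P \<le> 1"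
  shows "covered_vertices E P = {}"
proof -
  have "\<not> e \<subseteq> P" if "e \<in> E" for e
  proof
    assume "e \<subseteq> P"
    then have "card e \<le> 1"
      using card_mono[OF assms(2)] assms(3) le_trans by blast
    then show False
      using assms(1) that by simp
  qed
  then show ?thesis
    unfolding covered_vertices_def internal_edges_def by blast
qed

lemma exists_permutes_image_eq:
  assumes "finite V" "A \<subseteq> V" "B \<subseteq> V" "card A = card B"
  shows "\<exists>\<sigma>. \<sigma> permutes V \<and> \<sigma> ` A = B"
proof -
  have fin: "finite A" "finite B" "finite (V - A)" "finite (V - B)"
    using assms by (auto intro: finite_subset)
  obtain f where f: "bij_betw f A B"
    using finite_same_card_bij[OF fin(1,2) assms(4)] by blast
  have "card (V - A) = card (V - B)"
    using assms fin by (simp add: card_Diff_subset)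
  then obtain g where g: "bij_betw g (V - A) (V - B)"
    using finite_same_card_bij[OF fin(3,4)] by blast
  have g': "bij_betw (\<lambda>x. if x \<in> V then g x else x) (V - A) (V - B)"
    using g by (rule bij_betw_cong[THEN iffD1, rotated]) simp
  define \<sigma> where "\<sigma> x = (if x \<in> A then f x else if x \<in> V then g x else x)" for x
  have "bij_betw \<sigma> (A \<union> (V - A)) (B \<union> (V - B))"
    unfolding \<sigma>_def by (rule bij_betw_disjoint_Un[OF f g']) blast+
  then have "bij_betw \<sigma> V V"
    using assms(2,3) by (simp add: Un_absorb1)
  then have "\<sigma> permutes V"
    by (rule bij_imp_permutes) (use assms(2) in \<open>auto simp: \<sigma>_def\<close>)
  moreover have "\<sigma> ` A = B"
    using f by (simp add: \<sigma>_def bij_betw_def)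
  ultimately show ?thesis by blast
qed

lemma card_prefix_superset_permutes_image:
  assumes "\<sigma> permutes V"
  shows "card {\<pi>\<in>permutations_of_set V. \<sigma> ` s \<subseteq> set (take m \<pi>)}
       = card {\<pi>\<in>permutations_of_set V. s \<subseteq> set (take m \<pi>)}"
proof -
  have inj: "inj (map \<sigma>)"
    using assms by (simp add: permutes_inj)
  have "\<sigma> ` s \<subseteq> set (take m (map \<sigma> \<pi>)) \<longleftrightarrow> s \<subseteq> set (take m \<pi>)" for \<pi>
    using permutes_inj[OF assms] by (simp add: take_map inj_image_subset_iff)
  then have "{\<pi>\<in>map \<sigma> ` permutations_of_set V. \<sigma> ` s \<subseteq> set (take m \<pi>)}
      = map \<sigma> ` {\<pi>\<in>permutations_of_set V. s \<subseteq> set (take m \<pi>)}"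
    by blast
  moreover have "card (map \<sigma> ` X) = card X" for X
    using inj by (rule card_image[OF inj_on_subset, OF _ subset_UNIV])
  ultimately show ?thesis
    using permutations_of_set_image_permutes[OF assms] by simp
qed

lemma card_prefix_superset:
  assumes "finite V" "m \<le> card V" "s \<subseteq> V"
  shows "(card V choose card s) * card {\<pi>\<in>permutations_of_set V. s \<subseteq> set (take m \<pi>)}
       = card (permutations_of_set V) * (m choose card s)"
proof -
  define T where "T = {t. t \<subseteq> V \<and> card t = card s}"
  define count where "count t = card {\<pi>\<in>permutations_of_set V. t \<subseteq> set (take m \<pi>)}" for t
  have "finite T"
    using assms(1) by (intro finite_subset[of T "Pow V"]) (auto simp: T_def)
  have "card T = card V choose card s"
    unfolding T_def by (rule n_subsets[OF assms(1)])
  have "count t = count s" if "t \<in> T" for t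
  proof -
    from that have "t \<subseteq> V" "card s = card t"
      by (auto simp: T_def)
    then obtain \<sigma> where "\<sigma> permutes V" "\<sigma> ` s = t"
      using exists_permutes_image_eq[OF assms(1,3)] by blast
    then show ?thesis
      unfolding count_def using card_prefix_superset_permutes_image[of \<sigma> V s m] by simp
  qed
  then have "card T * count s = (\<Sum>t\<in>T. count t)"
    by simp
  also have "\<dots> = (\<Sum>\<pi>\<in>permutations_of_set V. card {t\<in>T. t \<subseteq> set (take m \<pi>)})"
    unfolding count_def by (rule sum_card_filter_swap[OF \<open>finite T\<close> finite_permutations_of_set])
  also have "\<dots> = (\<Sum>\<pi>\<in>permutations_of_set V. m choose card s)"
  proof (rule sum.cong)
    fix \<pi> assume \<pi>: "\<pi> \<in> permutations_of_set V"
    have "set (take m \<pi>) \<subseteq> V"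
      using set_take_subset[of m \<pi>] permutations_of_setD(1)[OF \<pi>] by simp
    then have "{t\<in>T. t \<subseteq> set (take m \<pi>)} = {t. t \<subseteq> set (take m \<pi>) \<and> card t = card s}"
      by (auto simp: T_def)
    moreover have "card (set (take m \<pi>)) = m"
      using assms(2) distinct_card[OF distinct_take[OF permutations_of_setD(2)[OF \<pi>]]]
        length_finite_permutations_of_set[OF \<pi>] by simp
    ultimately show "card {t\<in>T. t \<subseteq> set (take m \<pi>)} = m choose card s"
      by (simp add: n_subsets)
  qed simp
  finally show ?thesis
    using \<open>card T = card V choose card s\<close> by (simp add: count_def)
qed

lemma sum_card_internal_edges_prefix:
  assumes "ugraph V E" "m \<le> card V"
  shows "(card V choose 2) * (\<Sum>\<pi>\<in>permutations_of_set V. card (internal_edges E (set (take m \<pi>))))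
       = card E * card (permutations_of_set V) * (m choose 2)"
proof -
  have fin: "finite V" and edges: "\<And>e. e \<in> E \<Longrightarrow> e \<subseteq> V \<and> card e = 2"
    using assms(1) unfolding ugraph_def by auto
  have "(\<Sum>\<pi>\<in>permutations_of_set V. card (internal_edges E (set (take m \<pi>))))
      = (\<Sum>e\<in>E. card {\<pi>\<in>permutations_of_set V. e \<subseteq> set (take m \<pi>)})"
    unfolding internal_edges_def
    by (intro sum_card_filter_swap finite_permutations_of_set ugraph_finite_edges[OF assms(1)])
  then have "(card V choose 2) * (\<Sum>\<pi>\<in>permutations_of_set V. card (internal_edges E (set (take m \<pi>))))
      = (\<Sum>e\<in>E. (card V choose 2) * card {\<pi>\<in>permutations_of_set V. e \<subseteq> set (take m \<pi>)})"
    by (simp add: sum_distrib_left)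
  also have "\<dots> = (\<Sum>e\<in>E. card (permutations_of_set V) * (m choose 2))"
  proof (rule sum.cong)
    fix e assume "e \<in> E"
    with edges have "e \<subseteq> V" "card e = 2" by auto
    then show "(card V choose 2) * card {\<pi>\<in>permutations_of_set V. e \<subseteq> set (take m \<pi>)}
        = card (permutations_of_set V) * (m choose 2)"
      using card_prefix_superset[OF fin assms(2)] by metis
  qed simp
  finally show ?thesis
    by simp
qed

lemma sum_card_covered_vertices_prefix_le:
  assumes "ugraph V E" "\<forall>v\<in>V. degree E v \<le> d" "m \<le> card V"
  shows "card V * (card V - 1) * (\<Sum>\<pi>\<in>permutations_of_set V. card (covered_vertices E (set (take m \<pi>))))
       \<le> card V * d * card (permutations_of_set V) * (m * (m - 1))"
proof -
  define internal
    where "internal = (\<Sum>\<pi>\<in>permutations_of_set V. card (internal_edges E (set (take m \<pi>))))"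
  have "\<forall>e\<in>E. card e = 2"
    using assms(1) unfolding ugraph_def by auto
  then have "(\<Sum>\<pi>\<in>permutations_of_set V. card (covered_vertices E (set (take m \<pi>)))) \<le> 2 * internal"
    unfolding internal_def sum_distrib_left by (intro sum_mono card_covered_vertices_le)
  then have "card V * (card V - 1) * (\<Sum>\<pi>\<in>permutations_of_set V. card (covered_vertices E (set (take m \<pi>))))
      \<le> 2 * (card V choose 2) * (2 * internal)"
    by (simp add: two_mult_choose_two)
  also have "\<dots> = 2 * card E * card (permutations_of_set V) * (2 * (m choose 2))"
    using sum_card_internal_edges_prefix[OF assms(1,3)] by (simp add: internal_def)
  also have "\<dots> \<le> card V * d * card (permutations_of_set V) * (2 * (m choose 2))"
    using sum_mono[of V "degree E" "\<lambda>_. d"] assms(2)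
    by (simp add: sum_degree_eq_twice_card_edges[OF assms(1), symmetric])
  finally show ?thesis
    by (simp add: two_mult_choose_two)
qed

lemma expectation_covered_prefix_quadratic_le:
  assumes "ugraph V E" "V \<noteq> {}" "\<forall>v\<in>V. degree E v \<le> d" "m \<le> card V"
  shows "(real (card V) - 1) * measure_pmf.expectation (pmf_of_set (permutations_of_set V))
           (\<lambda>\<pi>. real (card (covered_vertices E (set (take m \<pi>)))))
         \<le> real d * real m * (real m - 1)"
proof -
  define n where "n = card V"
  define N where "N = card (permutations_of_set V)"
  define cov where "cov = (\<Sum>\<pi>\<in>permutations_of_set V. card (covered_vertices E (set (take m \<pi>))))"
  have fin: "finite V"
    using assms(1) unfolding ugraph_def by auto
  have n: "n > 0" and N: "N > 0"
    using fin assms(2) by (simp_all add: n_def N_def card_gt_0_iff)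
  have "real (n * (n - 1) * cov) \<le> real (n * d * N * (m * (m - 1)))"
    unfolding of_nat_le_iff n_def N_def cov_def
    by (rule sum_card_covered_vertices_prefix_le[OF assms(1,3,4)])
  then have "real n * ((real n - 1) * cov) \<le> real n * (real d * N * (real m * real (m - 1)))"
    using n by (simp add: mult_ac)
  moreover have "real m * real (m - 1) = real m * (real m - 1)"
    by (cases m) simp_all
  ultimately have "real n * ((real n - 1) * cov) \<le> real n * (real d * N * (real m * (real m - 1)))"
    by (simp only:)
  then have "(real n - 1) * cov / N \<le> real d * real m * (real m - 1)"
    using n N by (simp add: divide_le_eq mult_ac)
  moreover have "measure_pmf.expectation (pmf_of_set (permutations_of_set V))
           (\<lambda>\<pi>. real (card (covered_vertices E (set (take m \<pi>))))) = cov / N"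
    using fin by (simp add: integral_pmf_of_set cov_def N_def)
  ultimately show ?thesis
    by (simp add: n_def)
qed

lemma expectation_covered_prefix_linear_le:
  fixes \<delta> k :: real
  assumes "ugraph V E" "V \<noteq> {}" "\<forall>v\<in>V. degree E v \<le> d"
    and "real m \<le> \<delta> * card V" "0 \<le> \<delta>" "\<delta> \<le> 1" "\<delta> * d \<le> k"
  shows "measure_pmf.expectation (pmf_of_set (permutations_of_set V))
           (\<lambda>\<pi>. real (card (covered_vertices E (set (take m \<pi>))))) \<le> k * m"
    (is "?X \<le> _")
proof (cases "m \<le> 1")
  case True
  have "covered_vertices E (set (take m \<pi>)) = {}" for \<pi>
    using assms(1) True card_length[of "take m \<pi>"]
    by (intro covered_vertices_eq_empty) (auto simp: ugraph_def)
  moreover have "k \<ge> 0"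
    using order_trans[OF mult_nonneg_nonneg assms(7)] assms(5) by simp
  ultimately show ?thesis
    by simp
next
  case False
  define n where "n = card V"
  have "real m \<le> n"
    using assms(4-6) mult_left_le_one_le[of "real n" \<delta>] by (simp add: n_def)
  with False have "real n - 1 > 0" by simp
  have "(real n - 1) * ?X \<le> real d * real m * (real m - 1)"
    using expectation_covered_prefix_quadratic_le[OF assms(1-3)] \<open>real m \<le> n\<close> by (simp add: n_def)
  also have "\<dots> \<le> real d * real m * (\<delta> * (real n - 1))"
    using assms(4,6) by (intro mult_left_mono) (auto simp: algebra_simps n_def)
  also have "\<dots> \<le> (real n - 1) * (k * m)"
    using mult_right_mono[OF assms(7), of "real m * (real n - 1)"] \<open>real n - 1 > 0\<close>
    by (simp add: mult_ac)
  finally show ?thesis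
    using \<open>real n - 1 > 0\<close> by simp
qed

theorem lemma9:
  "\<exists>C>0. \<forall>(V::'a set) E (d::nat) (k::real) (\<delta>::real).
     ugraph V E \<and> V \<noteq> {} \<and> d > 0 \<and> (\<forall>v\<in>V. degree E v \<le> d) \<and>
     0 < \<delta> \<and> \<delta> \<le> 1 \<and> \<delta> \<le> k / real d \<longrightarrow>
     measure_pmf.expectation (pmf_of_set (permutations_of_set V))
        (\<lambda>\<pi>. real (card (covered_vertices E (prefix_set \<delta> V \<pi>))))
     \<le> C * k * real (nat \<lfloor>\<delta> * real (card V)\<rfloor>)"
proof (intro exI[of _ 1] conjI allI impI)
  fix V :: "'a set" and E d and k \<delta> :: real
  assume "ugraph V E \<and> V \<noteq> {} \<and> d > 0 \<and> (\<forall>v\<in>V. degree E v \<le> d) \<and>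
     0 < \<delta> \<and> \<delta> \<le> 1 \<and> \<delta> \<le> k / real d"
  then have G: "ugraph V E" "V \<noteq> {}" "\<forall>v\<in>V. degree E v \<le> d"
    and \<delta>: "0 < \<delta>" "\<delta> \<le> 1" "\<delta> \<le> k / d" and "d > 0"
    by simp_all
  then have "\<delta> * d \<le> k"
    by (simp add: pos_le_divide_eq)
  have "measure_pmf.expectation (pmf_of_set (permutations_of_set V))
      (\<lambda>\<pi>. real (card (covered_vertices E (set (take (nat \<lfloor>\<delta> * card V\<rfloor>) \<pi>)))))
      \<le> k * nat \<lfloor>\<delta> * card V\<rfloor>"
    by (rule expectation_covered_prefix_linear_le[OF G]) (use \<delta> \<open>\<delta> * d \<le> k\<close> in simp_all)
  then show "measure_pmf.expectation (pmf_of_set (permutations_of_set V))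
        (\<lambda>\<pi>. real (card (covered_vertices E (prefix_set \<delta> V \<pi>))))
     \<le> 1 * k * real (nat \<lfloor>\<delta> * real (card V)\<rfloor>)"
    by (simp add: prefix_set_def)
qed simp

end
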